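(* Let $\mathcal{N}=\{1,\dots,N\}$ be a finite set of players and let $v:2^{\mathcal{N}}\to\mathbb{R}$ be any real-valued set function (the coalition value, with $v(\emptyset)=0$). For a coalition $\mathcal{S}\subseteq\mathcal{N}$ and a player $i\in\mathcal{S}$, let the payoff $x_i(\mathcal{S})$ be the Shapley value of $i$ in the game $v$ restricted to $\mathcal{S}$: $$x_i(\mathcal{S})=\sum_{\mathcal{T}\subseteq \mathcal{S}\setminus\{i\}}\frac{|\mathcal{T}|!\,(|\mathcal{S}|-|\mathcal{T}|-1)!}{|\mathcal{S}|!}\bigl(v(\mathcal{T}\cup\{i\})-v(\mathcal{T})\bigr).$$ Consider the hedonic shift process with histories defined in the context below, started from an arbitrary initial partition $\Pi_0$ of $\mathcal{N}$ with all histories empty. Then every sequence of moves of this process is finite; i.e., the process always reaches, after finitely many moves, a final partition $\Pi_f$ at which no player has an admissible move.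
   Context: A coalition partition of $\mathcal{N}$ is a set $\Pi=\{\mathcal{S}_1,\dots,\mathcal{S}_l\}$ of nonempty pairwise disjoint subsets of $\mathcal{N}$ whose union is $\mathcal{N}$; $\mathcal{S}_\Pi(i)$ denotes the member of $\Pi$ containing $i$. Hedonic shift process with histories: the state is a pair $(\Pi,(h(i))_{i\in\mathcal{N}})$ where $\Pi$ is a coalition partition and each history $h(i)$ is a set of subsets of $\mathcal{N}\setminus\{i\}$; initially every $h(i)=\emptyset$. A move is performed by a single player $i$ as follows. Let $\mathcal{S}_{\mathrm{cur}}=\mathcal{S}_\Pi(i)$. The eligible targets are the sets $\mathcal{T}\in(\Pi\setminus\{\mathcal{S}_{\mathrm{cur}}\})\cup\{\emptyset\}$ with $\mathcal{T}\notin h(i)$. Player $i$ has an admissible move if some eligible $\mathcal{T}$ satisfies $x_i(\mathcal{T}\cup\{i\})>x_i(\mathcal{S}_{\mathrm{cur}})$; in that case $i$ chooses an eligible $\mathcal{T}$ maximizing $x_i(\mathcal{T}\cup\{i\})$ (ties broken arbitrarily), the partition becomes $(\Pi\setminus\{\mathcal{S}_{\mathrm{cur}},\mathcal{T}\})\cup\{\mathcal{S}_{\mathrm{cur}}\setminus\{i\},\mathcal{T}\cup\{i\}\}$ (with the empty set discarded if $\mathcal{S}_{\mathrm{cur}}\setminus\{i\}=\emptyset$), and $h(i)$ is replaced by $h(i)\cup\{\mathcal{S}_{\mathrm{cur}}\setminus\{i\}\}$; all other histories are unchanged. Moves may be performed by players in any order (asynchronously), one at a time. *)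

theory Defs
  imports Complex_Main "HOL-Library.Disjoint_Sets"
begin

definition shapley_payoff :: "('a set \<Rightarrow> real) \<Rightarrow> 'a \<Rightarrow> 'a set \<Rightarrow> real" where
  "shapley_payoff v i S =
     (\<Sum>T\<in>Pow (S - {i}).
        (fact (card T) * fact (card S - card T - 1) / fact (card S)) * (v (insert i T) - v T))"

definition cell :: "'a set set \<Rightarrow> 'a \<Rightarrow> 'a set" where
  "cell P i = (THE S. S \<in> P \<and> i \<in> S)"

type_synonym 'a hstate = "'a set set \<times> ('a \<Rightarrow> 'a set set)"

definition eligible :: "'a set set \<Rightarrow> ('a \<Rightarrow> 'a set set) \<Rightarrow> 'a \<Rightarrow> 'a set set" where
  "eligible P h i = {T. T \<in> (P - {cell P i}) \<union> {{}} \<and> T \<notin> h i}"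

definition hedonic_move :: "'a set \<Rightarrow> ('a set \<Rightarrow> real) \<Rightarrow> 'a hstate \<Rightarrow> 'a hstate \<Rightarrow> bool" where
  "hedonic_move Ns v st st' \<longleftrightarrow>
     (\<exists>i\<in>Ns. \<exists>T\<in>eligible (fst st) (snd st) i.
        let P = fst st; h = snd st; Scur = cell P i; x = shapley_payoff v i in
        (\<exists>T'\<in>eligible P h i. x (insert i T') > x Scur) \<and>
        (\<forall>T'\<in>eligible P h i. x (insert i T') \<le> x (insert i T)) \<and>
        fst st' = ((P - {Scur, T}) \<union> {Scur - {i}, insert i T}) - {{}} \<and>
        snd st' = h(i := h i \<union> {Scur - {i}}))"

end

theory Submission
  imports Defs
begin

text \<open>
  Following Hart and Mas-Colell, the Shapley value of player i in coalition S is the marginal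
  contribution of i to the potential
    P(S) = sum over U \<subseteq> S of (|U|-1)! (|S|-|U|)! / |S|! * v(U),
  i.e. x_i(S) = P(S) - P(S - {i}).  Summing P over the cells of a partition gives a function
  Phi on partitions.  When player i leaves its cell C and joins T, Phi changes by
  (P(T \<union> {i}) - P(T)) - (P(C) - P(C - {i})) = x_i(T \<union> {i}) - x_i(C), which is positive for
  every admissible move.  Hence Phi strictly increases along any run of the process, and since a finite set has
  finitely many partitions, no run can be infinite.
\<close>

lemma sum_Pow_insert:
  fixes f :: "'a set \<Rightarrow> 'b::comm_monoid_add"
  assumes "finite A" "a \<notin> A"
  shows "(\<Sum>U\<in>Pow (insert a A). f U) = (\<Sum>T\<in>Pow A. f T + f (insert a T))"
proof -
  have "inj_on (insert a) (Pow A)"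
    using assms(2) by (auto intro!: inj_onI)
  moreover have "Pow A \<inter> insert a ` Pow A = {}"
    using assms(2) by auto
  ultimately show ?thesis
    using assms(1) by (simp add: Pow_insert sum.union_disjoint sum.reindex sum.distrib)
qed

definition potential_weight :: "nat \<Rightarrow> nat \<Rightarrow> real" where
  "potential_weight s u = fact (u - 1) * fact (s - u) / fact s"

lemma potential_weight_diff:
  assumes "1 \<le> t" "t \<le> r"
  shows "potential_weight (Suc r) t - potential_weight r t = - potential_weight (Suc r) (Suc t)"
proof -
  obtain a where t: "t = Suc a"
    using assms(1) by (cases t) auto
  define b where "b = r - t"
  have r: "r = Suc (a + b)"
    using assms(2) unfolding b_def t by simp
  define c :: real where "c = fact a * fact b / fact (Suc r)"
  have w1: "potential_weight (Suc r) t = real (Suc b) * c"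
    and w2: "potential_weight r t = real (Suc r) * c"
    and w3: "potential_weight (Suc r) (Suc t) = real (Suc a) * c"
    unfolding potential_weight_def c_def by (simp_all add: t r)
  have "real (Suc r) = real (Suc a) + real (Suc b)"
    unfolding r by simp
  then show ?thesis
    unfolding w1 w2 w3 by (simp add: algebra_simps)
qed

definition shapley_potential :: "('a set \<Rightarrow> real) \<Rightarrow> 'a set \<Rightarrow> real" where
  "shapley_potential v S = (\<Sum>U\<in>Pow S. potential_weight (card S) (card U) * v U)"

lemma shapley_payoff_eq_potential_diff:
  assumes "finite S" "i \<in> S" "v {} = 0"
  shows "shapley_payoff v i S = shapley_potential v S - shapley_potential v (S - {i})"
proof -
  define R where "R = S - {i}"
  define r where "r = card R"
  have S: "S = insert i R" and iR: "i \<notin> R" and finR: "finite R"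
    using assms(1,2) unfolding R_def by auto
  have cardS: "card S = Suc r"
    unfolding S r_def using finR iR by simp
  let ?w = "potential_weight"
  have "shapley_potential v S - shapley_potential v R
      = (\<Sum>T\<in>Pow R. ?w (Suc r) (card T) * v T + ?w (Suc r) (card (insert i T)) * v (insert i T)
                      - ?w r (card T) * v T)"
    unfolding shapley_potential_def cardS r_def[symmetric]
    by (simp add: S sum_Pow_insert[OF finR iR] sum_subtractf)
  also have "\<dots> = (\<Sum>T\<in>Pow R. ?w (Suc r) (Suc (card T)) * (v (insert i T) - v T))"
  proof (rule sum.cong[OF refl])
    fix T assume "T \<in> Pow R"
    then have T: "finite T" "i \<notin> T" "card T \<le> r"
      using finR iR unfolding r_def by (auto intro: finite_subset card_mono)
    have "(?w (Suc r) (card T) - ?w r (card T)) * v T = - ?w (Suc r) (Suc (card T)) * v T"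
    proof (cases "T = {}")
      case True
      then show ?thesis using assms(3) by simp
    next
      case False
      then have "1 \<le> card T" using T(1) by (simp add: Suc_leI card_gt_0_iff)
      then show ?thesis using T(3) potential_weight_diff[of "card T" r] by simp
    qed
    then show "?w (Suc r) (card T) * v T + ?w (Suc r) (card (insert i T)) * v (insert i T)
                 - ?w r (card T) * v T = ?w (Suc r) (Suc (card T)) * (v (insert i T) - v T)"
      using T by (simp add: algebra_simps)
  qed
  also have "\<dots> = shapley_payoff v i S"
    unfolding shapley_payoff_def cardS R_def[symmetric] potential_weight_def
    by (simp add: Suc_diff_Suc r_def)
  finally show ?thesis unfolding R_def by simp
qed

lemma cell_eq:
  assumes "partition_on Ns P" "S \<in> P" "i \<in> S"
  shows "cell P i = S"
  unfolding cell_def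
proof (rule the_equality)
  show "S \<in> P \<and> i \<in> S" using assms(2,3) ..
  fix S' assume "S' \<in> P \<and> i \<in> S'"
  then show "S' = S"
    using assms disjointD[OF partition_onD2[OF assms(1)], of S' S] by blast
qed

lemma cell_in_partition:
  assumes "partition_on Ns P" "i \<in> Ns"
  shows "cell P i \<in> P" "i \<in> cell P i"
proof -
  obtain S where "S \<in> P" "i \<in> S"
    using assms partition_onD1[OF assms(1)] by blast
  with cell_eq[OF assms(1)] show "cell P i \<in> P" "i \<in> cell P i" by simp_all
qed

lemma mover_not_in_target:
  assumes "partition_on Ns P" "T \<in> insert {} (P - {cell P i})"
  shows "i \<notin> T"
  using assms(2) cell_eq[OF assms(1), of T i] by auto

definition move_player :: "'a set set \<Rightarrow> 'a \<Rightarrow> 'a set \<Rightarrow> 'a set set" where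
  "move_player P i T = (P - {cell P i, T}) \<union> {cell P i - {i}, insert i T} - {{}}"

lemma partition_on_move_player:
  assumes part: "partition_on Ns P" and i: "i \<in> Ns" and T: "T \<in> insert {} (P - {cell P i})"
  shows "partition_on Ns (move_player P i T)"
proof -
  define C where "C = cell P i"
  have C: "C \<in> P" "i \<in> C"
    using cell_in_partition[OF part i] unfolding C_def by simp_all
  have U: "\<Union>P = Ns" and D: "\<And>a b. a \<in> P \<Longrightarrow> b \<in> P \<Longrightarrow> a \<noteq> b \<Longrightarrow> a \<inter> b = {}"
    using partition_onD1[OF part] disjointD[OF partition_onD2[OF part]] by auto
  show ?thesis
    unfolding move_player_def C_def[symmetric]
  proof (rule partition_onI)
    show "\<Union>((P - {C, T}) \<union> {C - {i}, insert i T} - {{}}) = Ns"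
      using U C T unfolding C_def by blast
    show "{} \<notin> (P - {C, T}) \<union> {C - {i}, insert i T} - {{}}" by blast
    fix p q assume "p \<in> (P - {C, T}) \<union> {C - {i}, insert i T} - {{}}"
      and "q \<in> (P - {C, T}) \<union> {C - {i}, insert i T} - {{}}" and "p \<noteq> q"
    then show "disjnt p q" unfolding disjnt_def using D C T unfolding C_def[symmetric]
      by auto
  qed
qed

lemma sum_move_player:
  fixes g :: "'a set \<Rightarrow> 'b::ab_group_add"
  assumes part: "partition_on Ns P" and fin: "finite Ns" and i: "i \<in> Ns"
    and T: "T \<in> insert {} (P - {cell P i})" and g0: "g {} = 0"
  shows "sum g (move_player P i T)
           = sum g P + (g (insert i T) - g T) - (g (cell P i) - g (cell P i - {i}))"
proof -
  define C where "C = cell P i"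
  define Q where "Q = P - {C, T}"
  have C: "C \<in> P" "i \<in> C"
    using cell_in_partition[OF part i] unfolding C_def by simp_all
  have finP: "finite P" and finQ: "finite Q"
    using finite_elements[OF fin part] unfolding Q_def by simp_all
  have iT: "i \<notin> T" and TC: "T \<noteq> C"
    using mover_not_in_target[OF part T] T C unfolding C_def by auto
  have rest_new: "C - {i} \<notin> insert (insert i T) Q"
  proof
    assume A: "C - {i} \<in> insert (insert i T) Q"
    then have "C - {i} \<in> P"
      using iT unfolding Q_def by auto
    moreover then obtain x where "x \<in> C - {i}"
      using partition_onD3[OF part] by (metis ex_in_conv)
    ultimately have "cell P x = C - {i}" and "cell P x = C"
      using cell_eq[OF part, of "C - {i}" x] cell_eq[OF part C(1), of x] by auto
    then show False using C(2) by blast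
  qed
  have joined_new: "insert i T \<notin> Q"
    using cell_eq[OF part, of "insert i T" i] unfolding Q_def C_def by auto
  have "sum g (move_player P i T) = sum g (insert (C - {i}) (insert (insert i T) Q))"
    unfolding move_player_def C_def[symmetric] Q_def[symmetric] using finQ g0
    by (simp add: sum_diff1 insert_commute)
  also have "\<dots> = sum g Q + g (C - {i}) + g (insert i T)"
    using finQ rest_new joined_new by (simp add: algebra_simps)
  finally have new: "sum g (move_player P i T) = sum g Q + g (C - {i}) + g (insert i T)" .
  have "sum g P = sum g (insert T P)"
    using T g0 finP by (cases "T = {}") (auto simp: insert_absorb sum.insert_if)
  also have "insert T P = insert C (insert T Q)"
    using C unfolding Q_def by auto
  also have "sum g \<dots> = sum g Q + g C + g T"
    using finQ TC unfolding Q_def by (simp add: algebra_simps)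
  finally show ?thesis
    using new unfolding C_def by simp
qed

lemma hedonic_moveE:
  assumes "hedonic_move Ns v (P, h) st'"
  obtains i T where "i \<in> Ns" "T \<in> insert {} (P - {cell P i})"
    "shapley_payoff v i (cell P i) < shapley_payoff v i (insert i T)"
    "fst st' = move_player P i T"
proof -
  let ?x = "shapley_payoff v"
  from assms obtain i T where i: "i \<in> Ns" and T: "T \<in> eligible P h i"
    and improving: "\<exists>T'\<in>eligible P h i. ?x i (insert i T') > ?x i (cell P i)"
    and best: "\<forall>T'\<in>eligible P h i. ?x i (insert i T') \<le> ?x i (insert i T)"
    and new: "fst st' = move_player P i T"
    unfolding hedonic_move_def move_player_def Let_def by auto
  have "?x i (cell P i) < ?x i (insert i T)"
    using improving best by force
  moreover have "T \<in> insert {} (P - {cell P i})"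
    using T unfolding eligible_def by blast
  ultimately show ?thesis
    using that i new by blast
qed

definition partition_potential :: "('a set \<Rightarrow> real) \<Rightarrow> 'a set set \<Rightarrow> real" where
  "partition_potential v P = (\<Sum>S\<in>P. shapley_potential v S)"

lemma hedonic_move_increases_potential:
  assumes fin: "finite Ns" and v0: "v {} = 0" and part: "partition_on Ns (fst st)"
    and move: "hedonic_move Ns v st st'"
  shows "partition_on Ns (fst st')"
    and "partition_potential v (fst st) < partition_potential v (fst st')"
proof -
  obtain P h where st: "st = (P, h)" by (cases st)
  from move obtain i T where i: "i \<in> Ns" and T: "T \<in> insert {} (P - {cell P i})"
    and gain: "shapley_payoff v i (cell P i) < shapley_payoff v i (insert i T)"
    and new: "fst st' = move_player P i T"
    unfolding st by (rule hedonic_moveE)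
  have partP: "partition_on Ns P" using part st by simp
  show "partition_on Ns (fst st')"
    unfolding new using partition_on_move_player[OF partP i T] .
  have C: "cell P i \<in> P" "i \<in> cell P i"
    using cell_in_partition[OF partP i] by simp_all
  have iT: "i \<notin> T"
    using mover_not_in_target[OF partP T] .
  have "finite (cell P i)" and "finite (insert i T)"
    using C T fin partition_onD1[OF partP] by (auto intro: finite_subset)
  then have "shapley_payoff v i (cell P i)
               = shapley_potential v (cell P i) - shapley_potential v (cell P i - {i})"
    and "shapley_payoff v i (insert i T) = shapley_potential v (insert i T) - shapley_potential v T"
    using shapley_payoff_eq_potential_diff[where v = v, OF _ _ v0] C iT by simp_all
  moreover have "shapley_potential v {} = 0"
    using v0 unfolding shapley_potential_def by simp
  ultimately show "partition_potential v (fst st) < partition_potential v (fst st')"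
    using sum_move_player[OF partP fin i T, of "shapley_potential v"] gain
    unfolding partition_potential_def st new by simp
qed

lemma strict_mono_not_finite_range:
  fixes g :: "nat \<Rightarrow> 'b::linorder"
  assumes "strict_mono g" "finite A" "\<And>n. g n \<in> A"
  shows False
proof -
  have "range g \<subseteq> A"
    using assms(3) by auto
  then have "finite (range g)"
    using assms(2) by (rule finite_subset)
  moreover have "inj g"
    using assms(1) by (rule strict_mono_imp_inj_on)
  ultimately have "finite (UNIV :: nat set)"
    by (rule finite_imageD)
  then show False by simp
qed

theorem proposition1:
  fixes Ns :: "'a set" and v :: "'a set \<Rightarrow> real" and P0 :: "'a set set"
  assumes "finite Ns"
    and "v {} = 0"
    and "partition_on Ns P0"
  shows "\<not> (\<exists>f :: nat \<Rightarrow> 'a hstate.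
              f 0 = (P0, \<lambda>_. {}) \<and> (\<forall>n. hedonic_move Ns v (f n) (f (Suc n))))"
proof
  assume "\<exists>f :: nat \<Rightarrow> 'a hstate.
              f 0 = (P0, \<lambda>_. {}) \<and> (\<forall>n. hedonic_move Ns v (f n) (f (Suc n)))"
  then obtain f :: "nat \<Rightarrow> 'a hstate" where f0: "f 0 = (P0, \<lambda>_. {})"
    and moves: "\<And>n. hedonic_move Ns v (f n) (f (Suc n))" by blast
  have part: "partition_on Ns (fst (f n))" for n
    by (induction n) (use f0 assms(3) hedonic_move_increases_potential(1)[OF assms(1,2) _ moves] in auto)
  define g where "g n = partition_potential v (fst (f n))" for n
  have "strict_mono g"
    unfolding strict_mono_Suc_iff g_def
    using hedonic_move_increases_potential(2)[OF assms(1,2) part moves] by blast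
  moreover have "finite (partition_potential v ` {P. partition_on Ns P})"
    using finitely_many_partition_on[OF assms(1)] by (rule finite_imageI)
  moreover have "g n \<in> partition_potential v ` {P. partition_on Ns P}" for n
    using part unfolding g_def by blast
  ultimately show False
    by (rule strict_mono_not_finite_range)
qed

end
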